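(* The Hilbert calculus ${\bf Tmd}$ is sound and complete with respect to the Nmatrix $\mathcal M_{\bf Tmd}$: for every $\Gamma\cup\{\alpha\}\subseteq For$, $\Gamma\vdash_{\bf Tmd}\alpha$ iff $\Gamma\vDash_{\mathcal M_{\bf Tmd}}\alpha$.
   Context: Formulas are built from a denumerable set of propositional variables by the unary connectives $\neg$, $\Box$ and the binary connective $\to$; $For$ is the set of all formulas. Abbreviations: $\Diamond\alpha:=\neg\Box\neg\alpha$, $\alpha\vee\beta:=\neg\alpha\to\beta$. ${\bf Tmd}$ is the Hilbert calculus whose axioms are all instances (over $For$) of the axiom schemas of a standard Hilbert calculus for classical propositional logic in the signature $\{\neg,\to\}$, plus all instances of: (K) $\Box(\alpha\to\beta)\to(\Box\alpha\to\Box\beta)$; (Kdet) $\Box(\alpha\to\beta)\to(\Diamond\alpha\to\Box\beta)$; (K2) $\Diamond(\alpha\to\beta)\to(\Box\alpha\to\Diamond\beta)$; (M1) $\neg\Diamond\alpha\to\Box(\alpha\to\beta)$; (M2) $\Box\beta\to\Box(\alpha\to\beta)$; (M3) $\Diamond\beta\to\Diamond(\alpha\to\beta)$; (M4) $\Diamond\neg\alpha\to\Diamond(\alpha\to\beta)$; (T) $\Box\alpha\to\alpha$; (DN1) $\Box\alpha\to\Box\neg\neg\alpha$; (DN2) $\Box\neg\neg\alpha\to\Box\alpha$; modus ponens is the only rule. Nmatrix semantics: an Nmatrix has a domain $A$, designated values $D\subseteq A$ and, for each connective, a multioperation giving nonempty subsets of $A$; a valuation is $v:For\to A$ with $v(\neg\alpha)\in\tilde\neg(v(\alpha))$,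 $v(\Box\alpha)\in\tilde\Box(v(\alpha))$, $v(\alpha\to\beta)\in v(\alpha)\tilde\to v(\beta)$; $\Gamma\vDash\alpha$ iff every valuation designating all of $\Gamma$ designates $\alpha$. $\mathcal M_{\bf Tmd}$: domain $\{T^+,C^+,C^-,F^-\}$, designated $\{T^+,C^+\}$; $\tilde\neg T^+=\{F^-\}$, $\tilde\neg C^+=\{C^-\}$, $\tilde\neg C^-=\{C^+\}$, $\tilde\neg F^-=\{T^+\}$; $\tilde\Box T^+=\{T^+,C^+\}$ and $\tilde\Box x=\{C^-,F^-\}$ for $x\neq T^+$; implication is deterministic: $x\tilde\to y=\{\max(n(x),y)\}$, where $n(T^+)=F^-$, $n(C^+)=C^-$, $n(C^-)=C^+$, $n(F^-)=T^+$ and the maximum is taken in the chain $F^-<C^-<C^+<T^+$. *)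

theory Defs
  imports Main
begin

datatype fm = Var nat | Neg fm | Box fm | Imp fm fm

definition Dia :: "fm \<Rightarrow> fm" where "Dia a = Neg (Box (Neg a))"
definition Disj :: "fm \<Rightarrow> fm \<Rightarrow> fm" where "Disj a b = Imp (Neg a) b"

text \<open>Axioms of Tmd: a standard Hilbert calculus for classical propositional logic
 in the signature {neg, imp} (Mendelson's A1-A3), plus the modal schemas.\<close>
inductive Ax :: "fm \<Rightarrow> bool" where
  A1: "Ax (Imp a (Imp b a))"
| A2: "Ax (Imp (Imp a (Imp b c)) (Imp (Imp a b) (Imp a c)))"
| A3: "Ax (Imp (Imp (Neg b) (Neg a)) (Imp (Imp (Neg b) a) b))"
| K: "Ax (Imp (Box (Imp a b)) (Imp (Box a) (Box b)))"
| Kdet: "Ax (Imp (Box (Imp a b)) (Imp (Dia a) (Box b)))"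
| K2: "Ax (Imp (Dia (Imp a b)) (Imp (Box a) (Dia b)))"
| M1: "Ax (Imp (Neg (Dia a)) (Box (Imp a b)))"
| M2: "Ax (Imp (Box b) (Box (Imp a b)))"
| M3: "Ax (Imp (Dia b) (Dia (Imp a b)))"
| M4: "Ax (Imp (Dia (Neg a)) (Dia (Imp a b)))"
| T: "Ax (Imp (Box a) a)"
| DN1: "Ax (Imp (Box a) (Box (Neg (Neg a))))"
| DN2: "Ax (Imp (Box (Neg (Neg a))) (Box a))"

inductive derivable :: "fm set \<Rightarrow> fm \<Rightarrow> bool" (infix "\<turnstile>\<^sub>T\<^sub>m\<^sub>d" 50) where
  hyp: "a \<in> \<Gamma> \<Longrightarrow> \<Gamma> \<turnstile>\<^sub>T\<^sub>m\<^sub>d a"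
| ax: "Ax a \<Longrightarrow> \<Gamma> \<turnstile>\<^sub>T\<^sub>m\<^sub>d a"
| mp: "\<Gamma> \<turnstile>\<^sub>T\<^sub>m\<^sub>d a \<Longrightarrow> \<Gamma> \<turnstile>\<^sub>T\<^sub>m\<^sub>d Imp a b \<Longrightarrow> \<Gamma> \<turnstile>\<^sub>T\<^sub>m\<^sub>d b"

text \<open>The Nmatrix M_Tmd. Constructor order realises the chain F- < C- < C+ < T+.\<close>
datatype tv = Fm | Cm | Cp | Tp

fun rank :: "tv \<Rightarrow> nat" where
  "rank Fm = 0" | "rank Cm = 1" | "rank Cp = 2" | "rank Tp = 3"

definition tmax :: "tv \<Rightarrow> tv \<Rightarrow> tv" where
  "tmax x y = (if rank x \<le> rank y then y else x)"

definition designated :: "tv set" where "designated = {Tp, Cp}"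

fun nneg :: "tv \<Rightarrow> tv" where
  "nneg Tp = Fm" | "nneg Cp = Cm" | "nneg Cm = Cp" | "nneg Fm = Tp"

definition negM :: "tv \<Rightarrow> tv set" where "negM x = {nneg x}"

definition boxM :: "tv \<Rightarrow> tv set" where
  "boxM x = (if x = Tp then {Tp, Cp} else {Cm, Fm})"

definition impM :: "tv \<Rightarrow> tv \<Rightarrow> tv set" where
  "impM x y = {tmax (nneg x) y}"

definition valuation :: "(fm \<Rightarrow> tv) \<Rightarrow> bool" where
  "valuation v \<longleftrightarrow>
     (\<forall>a. v (Neg a) \<in> negM (v a)) \<and>
     (\<forall>a. v (Box a) \<in> boxM (v a)) \<and>
     (\<forall>a b. v (Imp a b) \<in> impM (v a) (v b))"

definition entails :: "fm set \<Rightarrow> fm \<Rightarrow> bool" (infix "\<Turnstile>\<^sub>M" 50) where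
  "\<Gamma> \<Turnstile>\<^sub>M a \<longleftrightarrow>
     (\<forall>v. valuation v \<longrightarrow> (\<forall>g\<in>\<Gamma>. v g \<in> designated) \<longrightarrow> v a \<in> designated)"

end

theory Submission
  imports Defs
begin

text \<open>
  Soundness: on designation the Nmatrix is classical (\<open>\<not>a\<close> is designated iff \<open>a\<close> is not,
  \<open>a \<rightarrow> b\<close> iff \<open>a\<close> is not or \<open>b\<close> is), \<open>\<box>a\<close> is designated exactly when \<open>a\<close> has value \<open>T\<^sup>+\<close>,
  and the values \<open>T\<^sup>+\<close>, \<open>F\<^sup>-\<close> propagate through \<open>\<not>\<close> and \<open>\<rightarrow>\<close> like necessary truth and
  necessary falsity. Every axiom thereby becomes a propositional tautology.

  Completeness: a set not deriving \<open>\<alpha>\<close> extends (Zorn, using finiteness of derivations) to a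
  set \<open>D\<close> that is maximal with this property. Reading \<open>T\<^sup>+\<close> as \<open>\<box>p \<in> D\<close>, \<open>F\<^sup>-\<close> as \<open>\<box>\<not>p \<in> D\<close>
  and designation as \<open>p \<in> D\<close> gives a valuation: axiom T makes \<open>T\<^sup>+\<close> designated, and
  DN1/DN2, Kdet/M1/M2 and K2/M3/M4 say exactly that \<open>\<box>\<not>\<not>p\<close>, \<open>\<box>(p \<rightarrow> q)\<close> and \<open>\<box>\<not>(p \<rightarrow> q)\<close>
  belong to \<open>D\<close> as the truth tables of the Nmatrix require.
\<close>

lemma derivable_mono: "\<Gamma> \<turnstile>\<^sub>T\<^sub>m\<^sub>d a \<Longrightarrow> \<Gamma> \<subseteq> \<Delta> \<Longrightarrow> \<Delta> \<turnstile>\<^sub>T\<^sub>m\<^sub>d a"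
  by (induction rule: derivable.induct) (auto intro: derivable.intros)

lemma derivable_imp_const: "\<Gamma> \<turnstile>\<^sub>T\<^sub>m\<^sub>d b \<Longrightarrow> \<Gamma> \<turnstile>\<^sub>T\<^sub>m\<^sub>d Imp a b"
  by (rule derivable.mp[OF _ derivable.ax[OF Ax.A1]])

lemma derivable_imp_distrib:
  "\<Gamma> \<turnstile>\<^sub>T\<^sub>m\<^sub>d Imp a (Imp b c) \<Longrightarrow> \<Gamma> \<turnstile>\<^sub>T\<^sub>m\<^sub>d Imp a b \<Longrightarrow> \<Gamma> \<turnstile>\<^sub>T\<^sub>m\<^sub>d Imp a c"
  by (rule derivable.mp[OF _ derivable.mp[OF _ derivable.ax[OF Ax.A2]]])

lemma derivable_imp_self: "\<Gamma> \<turnstile>\<^sub>T\<^sub>m\<^sub>d Imp a a"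
  by (rule derivable_imp_distrib[of _ _ "Imp a a"]) (rule derivable.ax, rule Ax.A1)+

theorem deduction_theorem: "insert a \<Gamma> \<turnstile>\<^sub>T\<^sub>m\<^sub>d b \<Longrightarrow> \<Gamma> \<turnstile>\<^sub>T\<^sub>m\<^sub>d Imp a b"
proof (induction "insert a \<Gamma>" b rule: derivable.induct)
  case (hyp b)
  then consider "b = a" | "b \<in> \<Gamma>"
    by blast
  then show ?case
    by cases (simp_all add: derivable_imp_self derivable_imp_const derivable.hyp)
next
  case (ax b)
  then show ?case
    by (simp add: derivable_imp_const derivable.ax)
next
  case (mp b c)
  then show ?case
    by (blast intro: derivable_imp_distrib)
qed

lemma derivable_reductio:
  "\<Gamma> \<turnstile>\<^sub>T\<^sub>m\<^sub>d Imp (Neg b) (Neg a) \<Longrightarrow> \<Gamma> \<turnstile>\<^sub>T\<^sub>m\<^sub>d Imp (Neg b) a \<Longrightarrow> \<Gamma> \<turnstile>\<^sub>T\<^sub>m\<^sub>d b"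
  by (rule derivable.mp[OF _ derivable.mp[OF _ derivable.ax[OF Ax.A3]]])

lemma derivable_ex_falso: "\<Gamma> \<turnstile>\<^sub>T\<^sub>m\<^sub>d Imp (Neg a) (Imp a b)"
proof -
  let ?\<Delta> = "insert a (insert (Neg a) \<Gamma>)"
  have "?\<Delta> \<turnstile>\<^sub>T\<^sub>m\<^sub>d Imp (Neg b) (Neg a)" "?\<Delta> \<turnstile>\<^sub>T\<^sub>m\<^sub>d Imp (Neg b) a"
    by (simp_all add: derivable.hyp derivable_imp_const)
  then have "?\<Delta> \<turnstile>\<^sub>T\<^sub>m\<^sub>d b"
    by (rule derivable_reductio)
  then show ?thesis
    by (intro deduction_theorem)
qed

lemma derivable_double_neg_elim: "\<Gamma> \<turnstile>\<^sub>T\<^sub>m\<^sub>d Imp (Neg (Neg a)) a"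
proof -
  let ?\<Delta> = "insert (Neg (Neg a)) \<Gamma>"
  have "?\<Delta> \<turnstile>\<^sub>T\<^sub>m\<^sub>d Imp (Neg a) (Neg (Neg a))" "?\<Delta> \<turnstile>\<^sub>T\<^sub>m\<^sub>d Imp (Neg a) (Neg a)"
    by (simp_all add: derivable.hyp derivable_imp_const derivable_imp_self)
  then have "?\<Delta> \<turnstile>\<^sub>T\<^sub>m\<^sub>d a"
    by (rule derivable_reductio)
  then show ?thesis
    by (rule deduction_theorem)
qed

lemma derivable_contrapos: "\<Gamma> \<turnstile>\<^sub>T\<^sub>m\<^sub>d Imp a b \<Longrightarrow> \<Gamma> \<turnstile>\<^sub>T\<^sub>m\<^sub>d Imp (Neg b) (Neg a)"
proof -
  assume ab: "\<Gamma> \<turnstile>\<^sub>T\<^sub>m\<^sub>d Imp a b"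
  let ?\<Delta> = "insert (Neg b) \<Gamma>"
  have "?\<Delta> \<turnstile>\<^sub>T\<^sub>m\<^sub>d Imp (Neg (Neg a)) (Neg b)"
    by (simp add: derivable.hyp derivable_imp_const)
  moreover have "insert (Neg (Neg a)) ?\<Delta> \<turnstile>\<^sub>T\<^sub>m\<^sub>d b"
  proof (rule derivable.mp)
    show "insert (Neg (Neg a)) ?\<Delta> \<turnstile>\<^sub>T\<^sub>m\<^sub>d a"
      by (rule derivable.mp[OF _ derivable_double_neg_elim]) (simp add: derivable.hyp)
    show "insert (Neg (Neg a)) ?\<Delta> \<turnstile>\<^sub>T\<^sub>m\<^sub>d Imp a b"
      using ab by (rule derivable_mono) blast
  qed
  then have "?\<Delta> \<turnstile>\<^sub>T\<^sub>m\<^sub>d Imp (Neg (Neg a)) b"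
    by (rule deduction_theorem)
  ultimately have "?\<Delta> \<turnstile>\<^sub>T\<^sub>m\<^sub>d Neg a"
    by (rule derivable_reductio)
  then show ?thesis
    by (rule deduction_theorem)
qed

lemma derivable_by_cases:
  assumes "\<Gamma> \<turnstile>\<^sub>T\<^sub>m\<^sub>d Imp a b" and "\<Gamma> \<turnstile>\<^sub>T\<^sub>m\<^sub>d Imp (Neg a) b"
  shows "\<Gamma> \<turnstile>\<^sub>T\<^sub>m\<^sub>d b"
proof -
  have "\<Gamma> \<turnstile>\<^sub>T\<^sub>m\<^sub>d Imp (Neg b) (Neg (Neg a))" "\<Gamma> \<turnstile>\<^sub>T\<^sub>m\<^sub>d Imp (Neg b) (Neg a)"
    using assms by (simp_all add: derivable_contrapos)
  then show ?thesis
    by (rule derivable_reductio)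
qed

lemma derivable_finite_support:
  "\<Gamma> \<turnstile>\<^sub>T\<^sub>m\<^sub>d a \<Longrightarrow> \<exists>\<Phi>. finite \<Phi> \<and> \<Phi> \<subseteq> \<Gamma> \<and> \<Phi> \<turnstile>\<^sub>T\<^sub>m\<^sub>d a"
proof (induction rule: derivable.induct)
  case (hyp a \<Gamma>)
  then show ?case
    by (intro exI[of _ "{a}"]) (simp add: derivable.hyp)
next
  case (ax a \<Gamma>)
  then show ?case
    by (intro exI[of _ "{}"]) (simp add: derivable.ax)
next
  case (mp \<Gamma> a b)
  then obtain \<Phi> \<Psi> where "finite \<Phi>" "\<Phi> \<subseteq> \<Gamma>" "\<Phi> \<turnstile>\<^sub>T\<^sub>m\<^sub>d a"
    and "finite \<Psi>" "\<Psi> \<subseteq> \<Gamma>" "\<Psi> \<turnstile>\<^sub>T\<^sub>m\<^sub>d Imp a b"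
    by blast
  moreover have "\<Phi> \<union> \<Psi> \<turnstile>\<^sub>T\<^sub>m\<^sub>d b"
    using derivable_mono[OF \<open>\<Phi> \<turnstile>\<^sub>T\<^sub>m\<^sub>d a\<close>, of "\<Phi> \<union> \<Psi>"]
      derivable_mono[OF \<open>\<Psi> \<turnstile>\<^sub>T\<^sub>m\<^sub>d Imp a b\<close>, of "\<Phi> \<union> \<Psi>"]
    by (blast intro: derivable.mp)
  ultimately show ?case
    by (intro exI[of _ "\<Phi> \<union> \<Psi>"]) simp
qed

lemma not_derivable_Union_chain:
  assumes "\<C> \<noteq> {}" and "subset.chain \<A> \<C>" and "\<And>\<Gamma>. \<Gamma> \<in> \<C> \<Longrightarrow> \<not> \<Gamma> \<turnstile>\<^sub>T\<^sub>m\<^sub>d c"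
  shows "\<not> \<Union>\<C> \<turnstile>\<^sub>T\<^sub>m\<^sub>d c"
proof
  assume "\<Union>\<C> \<turnstile>\<^sub>T\<^sub>m\<^sub>d c"
  then obtain \<Phi> where "finite \<Phi>" "\<Phi> \<subseteq> \<Union>\<C>" "\<Phi> \<turnstile>\<^sub>T\<^sub>m\<^sub>d c"
    using derivable_finite_support by blast
  moreover obtain \<Gamma> where "\<Gamma> \<in> \<C>" "\<Phi> \<subseteq> \<Gamma>"
    using finite_subset_Union_chain[OF \<open>finite \<Phi>\<close> \<open>\<Phi> \<subseteq> \<Union>\<C>\<close> assms(1,2)] .
  ultimately have "\<Gamma> \<turnstile>\<^sub>T\<^sub>m\<^sub>d c"
    using derivable_mono by blast
  with assms(3)[OF \<open>\<Gamma> \<in> \<C>\<close>] show False ..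
qed

lemma tv_eqI:
  assumes "x \<in> designated \<longleftrightarrow> y \<in> designated" and "x = Tp \<longleftrightarrow> y = Tp" and "x = Fm \<longleftrightarrow> y = Fm"
  shows "x = y"
  using assms by (cases x; cases y) (simp_all add: designated_def)

lemma Tp_designated [simp]: "Tp \<in> designated"
  by (simp add: designated_def)

lemma nneg_designated_iff [simp]: "nneg x \<in> designated \<longleftrightarrow> x \<notin> designated"
  by (cases x) (simp_all add: designated_def)

lemma nneg_eq_Tp_iff [simp]: "nneg x = Tp \<longleftrightarrow> x = Fm"
  by (cases x) simp_all

lemma nneg_eq_Fm_iff [simp]: "nneg x = Fm \<longleftrightarrow> x = Tp"
  by (cases x) simp_all

lemma tmax_designated_iff [simp]:
  "tmax x y \<in> designated \<longleftrightarrow> x \<in> designated \<or> y \<in> designated"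
  by (cases x; cases y) (simp_all add: tmax_def designated_def)

lemma tmax_eq_Tp_iff [simp]: "tmax x y = Tp \<longleftrightarrow> x = Tp \<or> y = Tp"
  by (cases x; cases y) (simp_all add: tmax_def)

lemma tmax_eq_Fm_iff [simp]: "tmax x y = Fm \<longleftrightarrow> x = Fm \<and> y = Fm"
  by (cases x; cases y) (simp_all add: tmax_def)

lemma valuation_iff:
  "valuation v \<longleftrightarrow>
     (\<forall>a. v (Neg a) = nneg (v a)) \<and>
     (\<forall>a. v (Box a) \<in> designated \<longleftrightarrow> v a = Tp) \<and>
     (\<forall>a b. v (Imp a b) = tmax (nneg (v a)) (v b))"
proof -
  have "y \<in> boxM x \<longleftrightarrow> (y \<in> designated \<longleftrightarrow> x = Tp)" for x y
    by (cases y) (simp_all add: boxM_def designated_def)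
  then show ?thesis
    by (simp add: valuation_def negM_def impM_def)
qed

lemma valuation_Neg: "valuation v \<Longrightarrow> v (Neg a) = nneg (v a)"
  by (simp add: valuation_iff)

lemma valuation_Imp: "valuation v \<Longrightarrow> v (Imp a b) = tmax (nneg (v a)) (v b)"
  by (simp add: valuation_iff)

lemma valuation_Box_designated_iff: "valuation v \<Longrightarrow> v (Box a) \<in> designated \<longleftrightarrow> v a = Tp"
  by (simp add: valuation_iff)

lemma valuation_Ax_designated:
  assumes "valuation v" and "Ax p"
  shows "v p \<in> designated"
  using assms(2)
  by (cases rule: Ax.cases)
    (auto simp: Dia_def valuation_Neg[OF assms(1)] valuation_Imp[OF assms(1)]
      valuation_Box_designated_iff[OF assms(1)])

theorem soundness: "\<Gamma> \<turnstile>\<^sub>T\<^sub>m\<^sub>d \<alpha> \<Longrightarrow> \<Gamma> \<Turnstile>\<^sub>M \<alpha>"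
  unfolding entails_def
proof (intro allI impI)
  fix v assume "\<Gamma> \<turnstile>\<^sub>T\<^sub>m\<^sub>d \<alpha>" and "valuation v" and "\<forall>g\<in>\<Gamma>. v g \<in> designated"
  then show "v \<alpha> \<in> designated"
  proof (induction rule: derivable.induct)
    case (hyp a \<Gamma>)
    then show ?case
      by blast
  next
    case (ax a \<Gamma>)
    then show ?case
      by (simp add: valuation_Ax_designated)
  next
    case (mp \<Gamma> a b)
    then show ?case
      by (simp add: valuation_Imp)
  qed
qed

locale saturated =
  fixes D :: "fm set" and c :: fm
  assumes not_derivable: "\<not> D \<turnstile>\<^sub>T\<^sub>m\<^sub>d c"
    and derivable_insert: "a \<notin> D \<Longrightarrow> insert a D \<turnstile>\<^sub>T\<^sub>m\<^sub>d c"

theorem lindenbaum: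
  assumes "\<not> \<Gamma> \<turnstile>\<^sub>T\<^sub>m\<^sub>d c"
  obtains D where "\<Gamma> \<subseteq> D" and "saturated D c"
proof -
  define \<A> where "\<A> = {D. \<Gamma> \<subseteq> D \<and> \<not> D \<turnstile>\<^sub>T\<^sub>m\<^sub>d c}"
  have "\<exists>M\<in>\<A>. \<forall>X\<in>\<A>. M \<subseteq> X \<longrightarrow> X = M"
  proof (rule subset_Zorn_nonempty)
    have "\<Gamma> \<in> \<A>"
      using assms by (simp add: \<A>_def)
    then show "\<A> \<noteq> {}"
      by auto
  next
    fix \<C> assume "\<C> \<noteq> {}" and chain: "subset.chain \<A> \<C>"
    then have "\<C> \<subseteq> \<A>"
      by (simp add: subset_chain_def)
    then have "\<Gamma> \<subseteq> \<Union>\<C>"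
      using \<open>\<C> \<noteq> {}\<close> by (auto simp: \<A>_def)
    moreover have "\<not> \<Union>\<C> \<turnstile>\<^sub>T\<^sub>m\<^sub>d c"
      using \<open>\<C> \<noteq> {}\<close> chain
    proof (rule not_derivable_Union_chain)
      show "\<not> \<Delta> \<turnstile>\<^sub>T\<^sub>m\<^sub>d c" if "\<Delta> \<in> \<C>" for \<Delta>
        using that \<open>\<C> \<subseteq> \<A>\<close> by (auto simp: \<A>_def)
    qed
    ultimately show "\<Union>\<C> \<in> \<A>"
      by (simp add: \<A>_def)
  qed
  then obtain D where "D \<in> \<A>" and maximal: "\<And>X. X \<in> \<A> \<Longrightarrow> D \<subseteq> X \<Longrightarrow> X = D"
    by blast
  have "saturated D c"
  proof
    show "\<not> D \<turnstile>\<^sub>T\<^sub>m\<^sub>d c"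
      using \<open>D \<in> \<A>\<close> by (simp add: \<A>_def)
    fix a assume "a \<notin> D"
    then have "insert a D \<notin> \<A>"
      using maximal[of "insert a D"] by blast
    then show "insert a D \<turnstile>\<^sub>T\<^sub>m\<^sub>d c"
      using \<open>D \<in> \<A>\<close> by (auto simp: \<A>_def)
  qed
  moreover have "\<Gamma> \<subseteq> D"
    using \<open>D \<in> \<A>\<close> by (simp add: \<A>_def)
  ultimately show thesis
    using that by blast
qed

context saturated
begin

lemma mem_if_derivable: "D \<turnstile>\<^sub>T\<^sub>m\<^sub>d a \<Longrightarrow> a \<in> D"
proof (rule ccontr)
  assume "D \<turnstile>\<^sub>T\<^sub>m\<^sub>d a" and "a \<notin> D"
  then have "D \<turnstile>\<^sub>T\<^sub>m\<^sub>d Imp a c"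
    by (simp add: derivable_insert deduction_theorem)
  with \<open>D \<turnstile>\<^sub>T\<^sub>m\<^sub>d a\<close> have "D \<turnstile>\<^sub>T\<^sub>m\<^sub>d c"
    by (rule derivable.mp)
  with not_derivable show False ..
qed

lemma Neg_mem_iff: "Neg a \<in> D \<longleftrightarrow> a \<notin> D"
proof
  assume "Neg a \<in> D"
  show "a \<notin> D"
  proof
    assume "a \<in> D"
    have "D \<turnstile>\<^sub>T\<^sub>m\<^sub>d Imp a c"
      using \<open>Neg a \<in> D\<close> by (rule derivable.mp[OF derivable.hyp derivable_ex_falso])
    then have "D \<turnstile>\<^sub>T\<^sub>m\<^sub>d c"
      by (rule derivable.mp[OF derivable.hyp[OF \<open>a \<in> D\<close>]])
    with not_derivable show False ..
  qed
next
  assume "a \<notin> D"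
  show "Neg a \<in> D"
  proof (rule ccontr)
    assume "Neg a \<notin> D"
    have "D \<turnstile>\<^sub>T\<^sub>m\<^sub>d Imp a c" and "D \<turnstile>\<^sub>T\<^sub>m\<^sub>d Imp (Neg a) c"
      using \<open>a \<notin> D\<close> \<open>Neg a \<notin> D\<close> by (simp_all add: derivable_insert deduction_theorem)
    then have "D \<turnstile>\<^sub>T\<^sub>m\<^sub>d c"
      by (rule derivable_by_cases)
    with not_derivable show False ..
  qed
qed

lemma Imp_mem_iff: "Imp a b \<in> D \<longleftrightarrow> (a \<in> D \<longrightarrow> b \<in> D)"
proof
  show "a \<in> D \<longrightarrow> b \<in> D" if "Imp a b \<in> D"
    using that derivable.hyp derivable.mp mem_if_derivable by blast
next
  assume "a \<in> D \<longrightarrow> b \<in> D"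
  then consider "Neg a \<in> D" | "b \<in> D"
    using Neg_mem_iff by blast
  then show "Imp a b \<in> D"
  proof cases
    case 1
    then have "D \<turnstile>\<^sub>T\<^sub>m\<^sub>d Imp a b"
      by (rule derivable.mp[OF derivable.hyp derivable_ex_falso])
    then show ?thesis
      by (rule mem_if_derivable)
  next
    case 2
    then have "D \<turnstile>\<^sub>T\<^sub>m\<^sub>d Imp a b"
      by (rule derivable_imp_const[OF derivable.hyp])
    then show ?thesis
      by (rule mem_if_derivable)
  qed
qed

lemma Ax_mem: "Ax a \<Longrightarrow> a \<in> D"
  by (intro mem_if_derivable derivable.ax)

lemma Box_mem_imp_mem: "Box a \<in> D \<Longrightarrow> a \<in> D"
  using Ax_mem[OF Ax.T] Imp_mem_iff by blast

lemma Dia_mem_iff: "Dia a \<in> D \<longleftrightarrow> Box (Neg a) \<notin> D"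
  by (simp add: Dia_def Neg_mem_iff)

lemma Box_Neg_Neg_mem_iff: "Box (Neg (Neg a)) \<in> D \<longleftrightarrow> Box a \<in> D"
  using Ax_mem[OF Ax.DN1] Ax_mem[OF Ax.DN2] Imp_mem_iff by blast

lemma Ax_mp_mem: "Ax (Imp a b) \<Longrightarrow> a \<in> D \<Longrightarrow> b \<in> D"
  using Ax_mem[of "Imp a b"] Imp_mem_iff[of a b] by blast

lemma Ax_mp2_mem: "Ax (Imp a (Imp b e)) \<Longrightarrow> a \<in> D \<Longrightarrow> b \<in> D \<Longrightarrow> e \<in> D"
  using Ax_mp_mem[of a "Imp b e"] Imp_mem_iff[of b e] by blast

lemma Box_Imp_mem_iff: "Box (Imp a b) \<in> D \<longleftrightarrow> Box (Neg a) \<in> D \<or> Box b \<in> D"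
proof
  assume "Box (Imp a b) \<in> D"
  then show "Box (Neg a) \<in> D \<or> Box b \<in> D"
    using Ax_mp2_mem[OF Ax.Kdet[of a b]] Dia_mem_iff[of a] by blast
next
  assume "Box (Neg a) \<in> D \<or> Box b \<in> D"
  then show "Box (Imp a b) \<in> D"
    using Ax_mp_mem[OF Ax.M1[of a b]] Ax_mp_mem[OF Ax.M2[of b a]] Dia_mem_iff[of a]
      Neg_mem_iff[of "Dia a"]
    by blast
qed

lemma Box_Neg_Imp_mem_iff: "Box (Neg (Imp a b)) \<in> D \<longleftrightarrow> Box a \<in> D \<and> Box (Neg b) \<in> D"
proof
  assume "Box (Neg (Imp a b)) \<in> D"
  then have "Dia (Neg a) \<notin> D" and "Dia b \<notin> D"
    using Ax_mp_mem[OF Ax.M4[of a b]] Ax_mp_mem[OF Ax.M3[of b a]] Dia_mem_iff[of "Imp a b"]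
    by blast+
  then show "Box a \<in> D \<and> Box (Neg b) \<in> D"
    using Dia_mem_iff[of "Neg a"] Dia_mem_iff[of b] Box_Neg_Neg_mem_iff[of a] by blast
next
  assume "Box a \<in> D \<and> Box (Neg b) \<in> D"
  then have "Dia (Imp a b) \<notin> D"
    using Ax_mp2_mem[OF Ax.K2[of a b]] Dia_mem_iff[of b] by blast
  then show "Box (Neg (Imp a b)) \<in> D"
    using Dia_mem_iff[of "Imp a b"] by blast
qed

definition canonical_val :: "fm \<Rightarrow> tv" where
  "canonical_val p =
     (if Box p \<in> D then Tp else if p \<in> D then Cp else if Box (Neg p) \<in> D then Fm else Cm)"

lemma canonical_val_designated_iff: "canonical_val p \<in> designated \<longleftrightarrow> p \<in> D"
  using Box_mem_imp_mem[of p] by (simp add: canonical_val_def designated_def)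

lemma canonical_val_eq_Tp_iff: "canonical_val p = Tp \<longleftrightarrow> Box p \<in> D"
  by (simp add: canonical_val_def)

lemma canonical_val_eq_Fm_iff: "canonical_val p = Fm \<longleftrightarrow> Box (Neg p) \<in> D"
  using Box_mem_imp_mem[of p] Box_mem_imp_mem[of "Neg p"] Neg_mem_iff[of p]
  by (auto simp: canonical_val_def)

lemma valuation_canonical_val: "valuation canonical_val"
proof (unfold valuation_iff, intro conjI allI)
  fix a b
  show "canonical_val (Neg a) = nneg (canonical_val a)"
    by (rule tv_eqI) (simp_all add: canonical_val_designated_iff canonical_val_eq_Tp_iff
        canonical_val_eq_Fm_iff Neg_mem_iff Box_Neg_Neg_mem_iff)
  show "canonical_val (Box a) \<in> designated \<longleftrightarrow> canonical_val a = Tp"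
    by (simp add: canonical_val_designated_iff canonical_val_eq_Tp_iff)
  show "canonical_val (Imp a b) = tmax (nneg (canonical_val a)) (canonical_val b)"
    by (rule tv_eqI) (simp_all add: canonical_val_designated_iff canonical_val_eq_Tp_iff
        canonical_val_eq_Fm_iff Imp_mem_iff Box_Imp_mem_iff Box_Neg_Imp_mem_iff)
qed

end

theorem completeness: "\<Gamma> \<Turnstile>\<^sub>M \<alpha> \<Longrightarrow> \<Gamma> \<turnstile>\<^sub>T\<^sub>m\<^sub>d \<alpha>"
proof (rule ccontr)
  assume "\<Gamma> \<Turnstile>\<^sub>M \<alpha>" and "\<not> \<Gamma> \<turnstile>\<^sub>T\<^sub>m\<^sub>d \<alpha>"
  from \<open>\<not> \<Gamma> \<turnstile>\<^sub>T\<^sub>m\<^sub>d \<alpha>\<close> obtain D where "\<Gamma> \<subseteq> D" and "saturated D \<alpha>"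
    by (rule lindenbaum)
  interpret saturated D \<alpha>
    by fact
  have "\<forall>g\<in>\<Gamma>. canonical_val g \<in> designated"
    using \<open>\<Gamma> \<subseteq> D\<close> by (auto simp: canonical_val_designated_iff)
  then have "canonical_val \<alpha> \<in> designated"
    using \<open>\<Gamma> \<Turnstile>\<^sub>M \<alpha>\<close> valuation_canonical_val unfolding entails_def by blast
  then have "\<alpha> \<in> D"
    by (simp add: canonical_val_designated_iff)
  then have "D \<turnstile>\<^sub>T\<^sub>m\<^sub>d \<alpha>"
    by (rule derivable.hyp)
  with not_derivable show False ..
qed

theorem mainTheorem6:
  fixes \<Gamma> :: "fm set" and \<alpha> :: fm
  shows "\<Gamma> \<turnstile>\<^sub>T\<^sub>m\<^sub>d \<alpha> \<longleftrightarrow> \<Gamma> \<Turnstile>\<^sub>M \<alpha>"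
  using soundness completeness by blast

end
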